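(* There is a constant $c>0$ such that for every integer $\kappa\ge 1$ (large enough), every $\frac{\kappa+1}{\kappa}$-APLS for the minimum edge cover problem on graphs of odd-girth at least $2\kappa+1$ has proof size at least $c\log\kappa$; i.e., the proof size is $\Omega(\log\kappa)$.
   Context: All graphs are finite, connected and undirected, $G=(V,E)$, $n=|V|$, $N(v)$ is the set of neighbors of $v$; each node distinguishes its incident edges by port numbers $1,\dots,|N(v)|$. An input assignment $\mathsf{I}:V\to\{0,1\}^*$ and an output assignment $\mathsf{O}:V\to\{0,1\}^*$ give each node a local input and a local output. A configuration graph is a pair $\langle G,S\rangle$ with $S:V\to\{0,1\}^*$; an IO graph $\langle G,\mathsf I,\mathsf O\rangle$ (with $S(v)=\mathsf I(v)\cdot\mathsf O(v)$) is a configuration graph. Given a universe $\mathcal U$ of configuration graphs and disjoint families $\mathcal F_Y,\mathcal F_N\subseteq\mathcal U$, a gap proof labeling scheme (GPLS) consists of a prover which, given a configuration graph in $\mathcal F_Y$, assigns a label $L(v)\in\{0,1\}^*$ to every node, and a verifier which at each node $v$ receives only $\langle S(v),L(v),L^N(v)\rangle$, where $L^N(v)$ is the vector of labels of $v$'s neighbors (indexed by port), and outputs True or False; the verifier accepts if all nodes output True and rejects otherwise. The GPLS is correct if (i) for every configuration graph in $\mathcal F_Y$ the verifier accepts under the prover's labels, and (ii) for every configuration graph in $\mathcal F_N$ the verifier rejects under every label assignment; nothing is required for other configuration graphs. Its proof size is the maximum label length assigned by the prover over configuration graphs in $\mathcal F_Y$. A distributed graph optimization problem $\Psi=\langle\Pi,f\rangle$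 consists of a set $\Pi$ of IO graphs and an integer-valued objective $f$ on $\Pi$; $\langle G,\mathsf I\rangle$ is legal if some $\mathsf O$ has $\langle G,\mathsf I,\mathsf O\rangle\in\Pi$ (a feasible solution); $OPT_\Psi(G,\mathsf I)$ is the infimum (minimization) or supremum (maximization) of $f$ over feasible solutions. For $\alpha\ge 1$, an $\alpha$-APLS for $\Psi$ is a GPLS over $\mathcal U=\{\langle G,\mathsf I,\mathsf O\rangle:\langle G,\mathsf I\rangle\text{ legal}\}$ with $\mathcal F_Y$ the IO graphs in $\Pi$ with $f=OPT_\Psi(G,\mathsf I)$, and $\mathcal F_N$ equal to $\mathcal U$ minus the IO graphs in $\Pi$ with $f\le\alpha\cdot OPT_\Psi(G,\mathsf I)$ (minimization) resp. $f\ge OPT_\Psi(G,\mathsf I)/\alpha$ (maximization). Restricting to a graph family means the universe contains only IO graphs whose underlying graph lies in the family. Minimum edge cover: the output assignment encodes a set $C\subseteq E$; it is feasible iff $C$ is an edge cover (every node is incident on an edge of $C$), and $f=|C|$ is minimized. The odd-girth of a graph is the length of its shortest odd cycle ($\infty$ if there is none). *)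

theory Defs
  imports Complex_Main "HOL-Library.Extended_Real"
begin

(* A port-numbered graph: vertex set V (finite, nonempty) and for each node v the
   list nb v of its neighbours, ordered by port number (port i+1 = index i). *)
definition port_graph :: "nat set \<Rightarrow> (nat \<Rightarrow> nat list) \<Rightarrow> bool" where
  "port_graph V nb \<longleftrightarrow> finite V \<and> V \<noteq> {} \<and>
     (\<forall>v\<in>V. distinct (nb v) \<and> set (nb v) \<subseteq> V \<and> v \<notin> set (nb v)) \<and>
     (\<forall>v\<in>V. \<forall>w\<in>V. w \<in> set (nb v) \<longleftrightarrow> v \<in> set (nb w)) \<and>
     (\<forall>u\<in>V. \<forall>w\<in>V. (\<lambda>x y. y \<in> set (nb x))\<^sup>*\<^sup>* u w)"

definition is_cycle :: "nat set \<Rightarrow> (nat \<Rightarrow> nat list) \<Rightarrow> nat list \<Rightarrow> bool" where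
  "is_cycle V nb cs \<longleftrightarrow> length cs \<ge> 3 \<and> distinct cs \<and> set cs \<subseteq> V \<and>
     (\<forall>i < length cs - 1. cs ! Suc i \<in> set (nb (cs ! i))) \<and>
     hd cs \<in> set (nb (last cs))"

definition odd_girth_ge :: "nat set \<Rightarrow> (nat \<Rightarrow> nat list) \<Rightarrow> nat \<Rightarrow> bool" where
  "odd_girth_ge V nb g \<longleftrightarrow>
     (\<forall>cs. is_cycle V nb cs \<and> odd (length cs) \<longrightarrow> length cs \<ge> g)"

(* Verifier at v sees (S v, L v, labels of neighbours in port order). *)
type_synonym verifier = "bool list \<Rightarrow> bool list \<Rightarrow> bool list list \<Rightarrow> bool"
type_synonym prover = "nat set \<Rightarrow> (nat \<Rightarrow> nat list) \<Rightarrow> (nat \<Rightarrow> bool list) \<Rightarrow> (nat \<Rightarrow> bool list)"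
type_synonym family = "nat set \<Rightarrow> (nat \<Rightarrow> nat list) \<Rightarrow> (nat \<Rightarrow> bool list) \<Rightarrow> bool"

definition accepts :: "verifier \<Rightarrow> nat set \<Rightarrow> (nat \<Rightarrow> nat list) \<Rightarrow> (nat \<Rightarrow> bool list)
     \<Rightarrow> (nat \<Rightarrow> bool list) \<Rightarrow> bool" where
  "accepts D V nb S L \<longleftrightarrow> (\<forall>v\<in>V. D (S v) (L v) (map L (nb v)))"

definition gpls :: "family \<Rightarrow> family \<Rightarrow> prover \<Rightarrow> verifier \<Rightarrow> bool" where
  "gpls FY FN P D \<longleftrightarrow>
     (\<forall>V nb S. FY V nb S \<longrightarrow> accepts D V nb S (P V nb S)) \<and>
     (\<forall>V nb S. FN V nb S \<longrightarrow> (\<forall>L. \<not> accepts D V nb S L))"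

definition proof_size :: "family \<Rightarrow> prover \<Rightarrow> ereal" where
  "proof_size FY P = (SUP x \<in> {(V, nb, S, v). FY V nb S \<and> v \<in> V}.
      (case x of (V, nb, S, v) \<Rightarrow> ereal (real (length (P V nb S v)))))"

(* Minimum edge cover. The (empty) input is I v = []; the output Out v is a bit string
   of length deg v, bit i telling whether the edge at port i+1 is in C. *)
definition ec_input :: "nat \<Rightarrow> bool list" where "ec_input v = []"

definition ec_feasible :: "nat set \<Rightarrow> (nat \<Rightarrow> nat list) \<Rightarrow> (nat \<Rightarrow> bool list) \<Rightarrow> bool" where
  "ec_feasible V nb Out \<longleftrightarrow>
     (\<forall>v\<in>V. length (Out v) = length (nb v)) \<and>
     (\<forall>v\<in>V. \<forall>i j. i < length (nb v) \<and> j < length (nb (nb v ! i)) \<and> nb (nb v ! i) ! j = v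
                \<longrightarrow> Out v ! i = Out (nb v ! i) ! j) \<and>
     (\<forall>v\<in>V. \<exists>i < length (nb v). Out v ! i)"

definition ec_set :: "nat set \<Rightarrow> (nat \<Rightarrow> nat list) \<Rightarrow> (nat \<Rightarrow> bool list) \<Rightarrow> nat set set" where
  "ec_set V nb Out = {{v, nb v ! i} | v i. v \<in> V \<and> i < length (nb v) \<and> Out v ! i}"

definition ec_f :: "nat set \<Rightarrow> (nat \<Rightarrow> nat list) \<Rightarrow> (nat \<Rightarrow> bool list) \<Rightarrow> nat" where
  "ec_f V nb Out = card (ec_set V nb Out)"

definition ec_legal :: "nat set \<Rightarrow> (nat \<Rightarrow> nat list) \<Rightarrow> bool" where
  "ec_legal V nb \<longleftrightarrow> (\<exists>Out. ec_feasible V nb Out)"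

definition ec_OPT :: "nat set \<Rightarrow> (nat \<Rightarrow> nat list) \<Rightarrow> nat" where
  "ec_OPT V nb = Inf {ec_f V nb Out | Out. ec_feasible V nb Out}"

definition io_config :: "(nat \<Rightarrow> bool list) \<Rightarrow> (nat \<Rightarrow> bool list) \<Rightarrow> nat \<Rightarrow> bool list" where
  "io_config I Out = (\<lambda>v. I v @ Out v)"

definition ec_universe :: "nat \<Rightarrow> nat set \<Rightarrow> (nat \<Rightarrow> nat list) \<Rightarrow> (nat \<Rightarrow> bool list) \<Rightarrow> bool" where
  "ec_universe g V nb Out \<longleftrightarrow> port_graph V nb \<and> odd_girth_ge V nb g \<and> ec_legal V nb"

definition ec_FY :: "nat \<Rightarrow> family" where
  "ec_FY g V nb S \<longleftrightarrow> (\<exists>Out. S = io_config ec_input Out \<and> ec_universe g V nb Out \<and>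
       ec_feasible V nb Out \<and> ec_f V nb Out = ec_OPT V nb)"

definition ec_FN :: "nat \<Rightarrow> real \<Rightarrow> family" where
  "ec_FN g \<alpha> V nb S \<longleftrightarrow> (\<exists>Out. S = io_config ec_input Out \<and> ec_universe g V nb Out \<and>
       \<not> (ec_feasible V nb Out \<and> real (ec_f V nb Out) \<le> \<alpha> * real (ec_OPT V nb)))"

definition ec_APLS :: "nat \<Rightarrow> real \<Rightarrow> prover \<Rightarrow> verifier \<Rightarrow> bool" where
  "ec_APLS g \<alpha> P D \<longleftrightarrow> gpls (ec_FY g) (ec_FN g \<alpha>) P D"

end

theory Submission
  imports Defs
begin

text \<open>Suppose every label has length at most \<open>s\<close>. Label an optimal edge cover of the
  odd cycle of length \<open>2\<kappa> + 1\<close> by the prover. Walking once around the cycle, the pairs of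
  consecutive local views (label, output) form an odd closed walk in a graph on at most
  \<open>2^(2s+6)\<close> states whose edges are the transitions the verifier accepts; cutting at a
  repeated state gives an odd closed walk of length \<open>l \<le> 2^(2s+6)\<close>. If \<open>l < \<kappa>\<close>,
  winding this walk \<open>2\<kappa> + 3\<close> times around a longer odd cycle yields an output accepted
  everywhere. Every node not choosing the edge to its successor is followed by one that does,
  so more than half the nodes choose it, and the cost exceeds \<open>(\<kappa> + 1)/\<kappa>\<close> times the
  optimum \<open>\<lceil>n/2\<rceil>\<close>. Hence \<open>\<kappa> \<le> 2^(2s+6)\<close>, i.e. \<open>s = \<Omega>(log \<kappa>)\<close>.\<close>

definition cyc_prev :: "nat \<Rightarrow> nat \<Rightarrow> nat" where
  "cyc_prev n v = (if v = 0 then n - 1 else v - 1)"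

definition cyc_next :: "nat \<Rightarrow> nat \<Rightarrow> nat" where
  "cyc_next n v = (if Suc v = n then 0 else Suc v)"

definition cyc_nb :: "nat \<Rightarrow> nat \<Rightarrow> nat list" where
  "cyc_nb n v = [cyc_prev n v, cyc_next n v]"

lemma cyc_prev_less: "v < n \<Longrightarrow> cyc_prev n v < n"
  by (auto simp: cyc_prev_def)

lemma cyc_prev_next: "v < n \<Longrightarrow> cyc_prev n (cyc_next n v) = v"
  by (auto simp: cyc_prev_def cyc_next_def)

lemma cyc_next_prev: "v < n \<Longrightarrow> cyc_next n (cyc_prev n v) = v"
  by (auto simp: cyc_prev_def cyc_next_def)

lemma cyc_next_next_neq: "v < n \<Longrightarrow> 3 \<le> n \<Longrightarrow> cyc_next n (cyc_next n v) \<noteq> v"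
  by (auto simp: cyc_next_def)

lemma cyc_prev_prev_neq: "v < n \<Longrightarrow> 3 \<le> n \<Longrightarrow> cyc_prev n (cyc_prev n v) \<noteq> v"
  by (auto simp: cyc_prev_def)

lemma cyc_next_mod: "0 < n \<Longrightarrow> cyc_next n (i mod n) = Suc i mod n"
  by (simp add: cyc_next_def mod_Suc)

lemma cyc_prev_Suc_mod: "0 < n \<Longrightarrow> cyc_prev n (Suc i mod n) = i mod n"
  by (auto simp: cyc_prev_def mod_Suc)

lemma port_graph_cycle:
  assumes "3 \<le> n"
  shows "port_graph {..<n} (cyc_nb n)"
proof -
  let ?R = "\<lambda>x y. y \<in> set (cyc_nb n x)"
  have from_0: "?R\<^sup>*\<^sup>* 0 w" if "w < n" for w
    using that
  proof (induction w)
    case (Suc w)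
    then have "?R w (Suc w)" by (simp add: cyc_nb_def cyc_next_def)
    with Suc show ?case by (meson Suc_lessD rtranclp.rtrancl_into_rtrancl)
  qed simp
  have to_0: "?R\<^sup>*\<^sup>* u 0" if "u < n" for u
    using that
  proof (induction u)
    case (Suc u)
    then have "?R (Suc u) u" by (simp add: cyc_nb_def cyc_prev_def)
    with Suc show ?case by (meson Suc_lessD converse_rtranclp_into_rtranclp)
  qed simp
  have "?R\<^sup>*\<^sup>* u w" if "u < n" "w < n" for u w
    using to_0[OF that(1)] from_0[OF that(2)] by (rule rtranclp_trans)
  then show ?thesis
    using assms unfolding port_graph_def
    by (auto simp: cyc_nb_def cyc_prev_def cyc_next_def lessThan_empty_iff split: if_splits)
qed

text \<open>Odd cycles of the cycle graph: a closed walk of length \<open>L\<close> on \<open>C\<^sub>n\<close> has a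
  winding sum of \<open>\<plusminus>1\<close> steps that is divisible by \<open>n\<close> and has the parity of \<open>L\<close>, so
  for odd \<open>L\<close> it is a non-zero multiple of \<open>n\<close> of absolute value at most \<open>L\<close>.\<close>

lemma cyc_nb_step_dvd:
  assumes "x < n" "y \<in> set (cyc_nb n x)"
  shows "int n dvd (int y - int x - (if y = cyc_next n x then 1 else -1))"
proof (cases "y = cyc_next n x")
  case True
  then show ?thesis
  proof (cases "Suc x = n")
    case True
    then have "int y - int x - 1 = - int n" using \<open>y = cyc_next n x\<close> by (simp add: cyc_next_def)
    then show ?thesis using \<open>y = cyc_next n x\<close> by simp
  qed (simp add: cyc_next_def)
next
  case False
  then have "y = cyc_prev n x" using assms by (auto simp: cyc_nb_def)
  then show ?thesis using False assms by (cases "x = 0") (auto simp: cyc_prev_def of_nat_diff)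
qed

lemma sum_signs_parity:
  assumes "\<forall>i<L. d i = 1 \<or> d i = (-1::int)"
  shows "even (sum d {..<L} - int L)"
  using assms by (induction L) auto

lemma abs_sum_signs_le:
  assumes "\<forall>i<L. d i = 1 \<or> d i = (-1::int)"
  shows "\<bar>sum d {..<L}\<bar> \<le> int L"
proof -
  have "\<bar>sum d {..<L}\<bar> \<le> (\<Sum>i<L. \<bar>d i\<bar>)" by (rule sum_abs)
  also have "\<dots> = (\<Sum>i<L. 1)" using assms by (intro sum.cong) auto
  finally show ?thesis by simp
qed

lemma is_cycle_step:
  assumes "is_cycle V nb cs" "i < length cs"
  shows "cs ! (Suc i mod length cs) \<in> set (nb (cs ! i))"
proof (cases "Suc i < length cs")
  case True
  then show ?thesis using assms by (simp add: is_cycle_def)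
next
  case False
  then have "Suc i = length cs" using assms(2) by simp
  then have i: "i = length cs - 1" "Suc i mod length cs = 0" by auto
  have "cs \<noteq> []" using assms(2) by auto
  then show ?thesis using assms(1) i by (simp add: is_cycle_def hd_conv_nth last_conv_nth)
qed

lemma odd_girth_ge_cycle:
  assumes "g \<le> n"
  shows "odd_girth_ge {..<n} (cyc_nb n) g"
  unfolding odd_girth_ge_def
proof (intro allI impI, elim conjE)
  fix cs assume cyc: "is_cycle {..<n} (cyc_nb n) cs" and odd: "odd (length cs)"
  define L where "L = length cs"
  have L0: "0 < L" using odd L_def odd_pos by blast
  have on_cycle: "cs ! i < n" if "i < L" for i
    using cyc that nth_mem[of i cs] unfolding is_cycle_def L_def by blast
  define d where "d i = (if cs ! (Suc i mod L) = cyc_next n (cs ! i) then 1 else (-1::int))" for i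
  have signs: "\<forall>i<L. d i = 1 \<or> d i = -1" by (simp add: d_def)
  define f where "f i = int (cs ! (i mod L))" for i
  have "(\<Sum>i<L. f (Suc i) - f i) = 0"
    by (simp only: sum_lessThan_telescope) (simp add: f_def)
  moreover have "int n dvd (\<Sum>i<L. f (Suc i) - f i - d i)"
    using cyc_nb_step_dvd[OF on_cycle is_cycle_step[OF cyc]]
    by (intro dvd_sum) (simp add: d_def f_def L_def)
  ultimately have dvd: "int n dvd sum d {..<L}"
    by (simp add: sum_subtractf)
  have "odd (sum d {..<L})"
    using sum_signs_parity[OF signs] odd L_def by auto
  then have "int n \<le> \<bar>sum d {..<L}\<bar>"
    using dvd_imp_le_int[OF _ dvd] by fastforce
  then show "g \<le> length cs"
    using abs_sum_signs_le[OF signs] assms L_def by linarith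
qed

lemma io_config_ec_input [simp]: "io_config ec_input Out = Out"
  by (simp add: io_config_def ec_input_def)

lemma ec_feasible_cycleD:
  assumes "ec_feasible {..<n} (cyc_nb n) Out" "v < n"
  shows "length (Out v) = 2" "Out v ! 1 = Out (cyc_next n v) ! 0" "Out v ! 0 \<or> Out v ! 1"
proof -
  show "length (Out v) = 2" using assms by (simp add: ec_feasible_def cyc_nb_def)
  have "cyc_nb n (cyc_nb n v ! 1) ! 0 = v" using assms(2) by (simp add: cyc_nb_def cyc_prev_next)
  then show "Out v ! 1 = Out (cyc_next n v) ! 0"
    using assms unfolding ec_feasible_def by (force simp: cyc_nb_def)
  have "\<exists>i<length (cyc_nb n v). Out v ! i"
    using assms unfolding ec_feasible_def by blast
  then show "Out v ! 0 \<or> Out v ! 1" by (auto simp: cyc_nb_def less_Suc_eq)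
qed

lemma card_next_covered_le_ec_f:
  assumes "3 \<le> n"
  shows "card {v. v < n \<and> Out v ! 1} \<le> ec_f {..<n} (cyc_nb n) Out"
proof -
  let ?C = "{v. v < n \<and> Out v ! 1}"
  have "inj_on (\<lambda>v. {v, cyc_next n v}) ?C"
  proof (rule inj_onI)
    fix v w assume "v \<in> ?C" "w \<in> ?C" "{v, cyc_next n v} = {w, cyc_next n w}"
    then show "v = w"
      using assms cyc_next_next_neq[of v n] by (auto simp: doubleton_eq_iff)
  qed
  then have "card ?C = card ((\<lambda>v. {v, cyc_next n v}) ` ?C)"
    by (simp add: card_image)
  also have "\<dots> \<le> card (ec_set {..<n} (cyc_nb n) Out)"
  proof (rule card_mono)
    have "ec_set {..<n} (cyc_nb n) Out \<subseteq> (\<lambda>(v, i). {v, cyc_nb n v ! i}) ` ({..<n} \<times> {..<2})"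
      by (auto simp: ec_set_def cyc_nb_def)
    then show "finite (ec_set {..<n} (cyc_nb n) Out)"
      by (rule finite_subset) auto
    show "(\<lambda>v. {v, cyc_next n v}) ` ?C \<subseteq> ec_set {..<n} (cyc_nb n) Out"
      unfolding ec_set_def by (force simp: cyc_nb_def)
  qed
  finally show ?thesis by (simp add: ec_f_def)
qed

definition alt_cover :: "nat \<Rightarrow> nat \<Rightarrow> bool list" where
  "alt_cover n v = [even (cyc_prev n v), even v]"

lemma ec_feasible_alt_cover:
  assumes "3 \<le> n"
  shows "ec_feasible {..<n} (cyc_nb n) (alt_cover n)"
  unfolding ec_feasible_def
proof (intro conjI ballI allI impI)
  fix v assume "v \<in> {..<n}"
  then show "length (alt_cover n v) = length (cyc_nb n v)"
    by (simp add: alt_cover_def cyc_nb_def)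
  have "even (cyc_prev n v) \<or> even v"
    by (cases "v = 0") (auto simp: cyc_prev_def)
  then show "\<exists>i<length (cyc_nb n v). alt_cover n v ! i"
    by (auto simp: alt_cover_def cyc_nb_def)
next
  fix v i j
  assume "v \<in> {..<n}"
    and "i < length (cyc_nb n v) \<and> j < length (cyc_nb n (cyc_nb n v ! i)) \<and> cyc_nb n (cyc_nb n v ! i) ! j = v"
  then show "alt_cover n v ! i = alt_cover n (cyc_nb n v ! i) ! j"
    using assms cyc_prev_prev_neq[of v n] cyc_next_next_neq[of v n]
    by (auto simp: cyc_nb_def alt_cover_def cyc_prev_next cyc_next_prev less_Suc_eq)
qed

lemma ec_f_alt_cover_le: "ec_f {..<n} (cyc_nb n) (alt_cover n) \<le> (n + 1) div 2"
proof -
  let ?Ev = "(\<lambda>j. 2 * j) ` {..<(n + 1) div 2}"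
  have "ec_set {..<n} (cyc_nb n) (alt_cover n) \<subseteq> (\<lambda>v. {v, cyc_next n v}) ` ?Ev"
  proof
    fix e assume "e \<in> ec_set {..<n} (cyc_nb n) (alt_cover n)"
    then obtain v i where e: "e = {v, cyc_nb n v ! i}" "v < n" "i < 2" "alt_cover n v ! i"
      by (auto simp: ec_set_def cyc_nb_def)
    have "\<exists>u. u < n \<and> even u \<and> e = {u, cyc_next n u}"
    proof (cases i)
      case 0
      then show ?thesis using e
        by (intro exI[of _ "cyc_prev n v"])
          (auto simp: alt_cover_def cyc_nb_def cyc_next_prev cyc_prev_less insert_commute)
    next
      case (Suc j)
      then show ?thesis using e by (intro exI[of _ v]) (auto simp: alt_cover_def cyc_nb_def)
    qed
    then show "e \<in> (\<lambda>v. {v, cyc_next n v}) ` ?Ev"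
      by (auto elim!: evenE)
  qed
  then have "ec_f {..<n} (cyc_nb n) (alt_cover n) \<le> card ((\<lambda>v. {v, cyc_next n v}) ` ?Ev)"
    unfolding ec_f_def by (rule card_mono[rotated]) auto
  also have "\<dots> \<le> card ?Ev" by (rule card_image_le) auto
  also have "\<dots> \<le> (n + 1) div 2" by (metis card_image_le card_lessThan finite_lessThan)
  finally show ?thesis .
qed

lemma ec_OPT_cycle_le:
  assumes "3 \<le> n"
  shows "ec_OPT {..<n} (cyc_nb n) \<le> (n + 1) div 2"
proof -
  have "ec_OPT {..<n} (cyc_nb n) \<le> ec_f {..<n} (cyc_nb n) (alt_cover n)"
    unfolding ec_OPT_def using ec_feasible_alt_cover[OF assms] by (intro cInf_lower) auto
  then show ?thesis using ec_f_alt_cover_le[of n] by linarith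
qed

lemma ec_optimal_cover_exists:
  assumes "ec_legal V nb"
  obtains Out where "ec_feasible V nb Out" "ec_f V nb Out = ec_OPT V nb"
proof -
  have "ec_OPT V nb \<in> {ec_f V nb Out | Out. ec_feasible V nb Out}"
    unfolding ec_OPT_def using assms by (intro Inf_nat_def1) (auto simp: ec_legal_def)
  then obtain Out where "ec_feasible V nb Out" "ec_f V nb Out = ec_OPT V nb"
    by (auto simp only: mem_Collect_eq)
  then show ?thesis by (rule that)
qed

lemma ec_universe_cycle:
  assumes "3 \<le> n" "g \<le> n"
  shows "ec_universe g {..<n} (cyc_nb n) Out"
  unfolding ec_universe_def ec_legal_def
  using port_graph_cycle[OF assms(1)] odd_girth_ge_cycle[OF assms(2)] ec_feasible_alt_cover[OF assms(1)]
  by blast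

definition closed_walk :: "('a \<Rightarrow> 'a \<Rightarrow> bool) \<Rightarrow> (nat \<Rightarrow> 'a) \<Rightarrow> nat \<Rightarrow> bool" where
  "closed_walk R w l \<longleftrightarrow> (\<forall>i<l. R (w i) (w (Suc i))) \<and> w l = w 0"

lemma closed_walk_segment:
  assumes "closed_walk R w N" "a \<le> b" "b \<le> N" "w a = w b"
  shows "closed_walk R (\<lambda>i. w (a + i)) (b - a)"
  using assms by (auto simp: closed_walk_def)

lemma closed_walk_cut:
  assumes walk: "closed_walk R w N" and "a \<le> b" "b \<le> N" "w a = w b"
  shows "closed_walk R (\<lambda>i. if i \<le> a then w i else w (i + (b - a))) (N - (b - a))"
    (is "closed_walk R ?w _")
  unfolding closed_walk_def
proof (intro conjI allI impI)
  fix i assume i: "i < N - (b - a)"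
  have step: "R (w j) (w (Suc j))" if "j < N" for j
    using walk that by (simp add: closed_walk_def)
  consider "i < a" | "i = a" | "a < i" by linarith
  then show "R (?w i) (?w (Suc i))"
  proof cases
    case 1 then show ?thesis using step assms(2,3) by auto
  next
    case 2 then show ?thesis using step[of b] assms i by auto
  next
    case 3 then show ?thesis using step[of "i + (b - a)"] i by auto
  qed
next
  show "?w (N - (b - a)) = ?w 0"
    using assms by (cases "b = N") (auto simp: closed_walk_def)
qed

text \<open>Pigeonhole on the first \<open>card A + 1\<close> states of a long odd closed walk yields a
  repeated state; the walk splits there into two closed walks, one of which is odd.\<close>

lemma closed_walk_odd_shorten:
  assumes "finite A" "w ` {..N} \<subseteq> A" "closed_walk R w N" "odd N"
  shows "\<exists>q l. odd l \<and> l \<le> card A \<and> closed_walk R q l"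
  using assms(2-)
proof (induction N arbitrary: w rule: less_induct)
  case (less N)
  show ?case
  proof (cases "N \<le> card A")
    case True then show ?thesis using less.prems by blast
  next
    case False
    have "\<not> inj_on w {..card A}"
    proof
      assume "inj_on w {..card A}"
      then have "card (w ` {..card A}) = card A + 1" by (simp add: card_image)
      moreover have "card (w ` {..card A}) \<le> card A"
        using less.prems(1) False by (intro card_mono[OF assms(1)]) auto
      ultimately show False by simp
    qed
    then obtain x y where "x \<le> card A" "y \<le> card A" "x \<noteq> y" "w x = w y"
      unfolding inj_on_def by auto
    then obtain a b where ab: "a < b" "b \<le> card A" "w a = w b"
      by (metis linorder_neqE_nat)
    have b: "a \<le> b" "b \<le> N" "b - a < N" "N - (b - a) < N"
      using ab False by auto
    have "odd ((b - a) + (N - (b - a)))" using \<open>odd N\<close> b by simp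
    then consider "odd (b - a)" | "odd (N - (b - a))" by auto
    then show ?thesis
    proof cases
      case 1
      have "(\<lambda>i. w (a + i)) ` {..b - a} \<subseteq> A" using less.prems(1) b by auto
      then show ?thesis
        by (rule less.IH[OF b(3) _ closed_walk_segment[OF less.prems(2) b(1,2) ab(3)] 1])
    next
      case 2
      have "(\<lambda>i. if i \<le> a then w i else w (i + (b - a))) ` {..N - (b - a)} \<subseteq> A"
        using less.prems(1) b by auto
      then show ?thesis
        by (rule less.IH[OF b(4) _ closed_walk_cut[OF less.prems(2) b(1,2) ab(3)] 2])
    qed
  qed
qed

lemma closed_walk_mod:
  assumes "closed_walk R q l" "0 < l"
  shows "R (q (j mod l)) (q (Suc j mod l))"
proof (cases "Suc (j mod l) = l")
  case True
  then have "Suc j mod l = 0" by (metis mod_Suc)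
  then show ?thesis using assms True by (metis lessI closed_walk_def)
next
  case False
  then have "Suc j mod l = Suc (j mod l)" by (metis mod_Suc)
  then show ?thesis using assms by (simp add: closed_walk_def)
qed

lemma card_mod_periodic:
  "card {v. v < k * l \<and> P (v mod l)} = k * card {j. j < l \<and> P j}"
proof (induction k)
  case (Suc k)
  have "{v. v < Suc k * l \<and> P (v mod l)}
      = {v. v < k * l \<and> P (v mod l)} \<union> (\<lambda>j. k * l + j) ` {j. j < l \<and> P j}"
  proof (intro set_eqI iffI)
    fix v assume v: "v \<in> {v. v < Suc k * l \<and> P (v mod l)}"
    show "v \<in> {v. v < k * l \<and> P (v mod l)} \<union> (\<lambda>j. k * l + j) ` {j. j < l \<and> P j}"
    proof (cases "v < k * l")
      case False
      then obtain j where "v = k * l + j" by (metis le_iff_add not_less)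
      then show ?thesis using v by auto
    qed (use v in auto)
  qed auto
  moreover have "card ({v. v < k * l \<and> P (v mod l)} \<union> (\<lambda>j. k * l + j) ` {j. j < l \<and> P j})
      = card {v. v < k * l \<and> P (v mod l)} + card ((\<lambda>j. k * l + j) ` {j. j < l \<and> P j})"
    by (rule card_Un_disjoint) auto
  moreover have "card ((\<lambda>j. k * l + j) ` {j. j < l \<and> P j}) = card {j. j < l \<and> P j}"
    by (rule card_image) (auto simp: inj_on_def)
  ultimately show ?case
    using Suc by simp
qed simp

text \<open>Each \<open>False\<close> is followed (cyclically) by a \<open>True\<close>; injectivity of the successor map
  gives at least as many \<open>True\<close>s as \<open>False\<close>s, and odd length makes the inequality strict.\<close>

lemma card_true_cyclic_no_two_false:
  assumes "odd l" "\<And>j. \<not> b (j mod l) \<Longrightarrow> b (Suc j mod l)"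
  shows "l + 1 \<le> 2 * card {j. j < l \<and> b j}"
proof -
  let ?F = "{j. j < l \<and> \<not> b j}" and ?T = "{j. j < l \<and> b j}"
  have "l > 0" using assms(1) by (intro odd_pos)
  have "card ?F \<le> card ?T"
  proof (rule card_inj_on_le)
    show "inj_on (\<lambda>j. Suc j mod l) ?F"
    proof (rule inj_onI)
      fix x y assume "x \<in> ?F" "y \<in> ?F" "Suc x mod l = Suc y mod l"
      then show "x = y"
        by (cases "Suc x = l"; cases "Suc y = l") auto
    qed
    show "(\<lambda>j. Suc j mod l) ` ?F \<subseteq> ?T"
      using assms(2) \<open>l > 0\<close> by fastforce
  qed simp
  moreover have "card ?F + card ?T = l"
  proof -
    have "card (?F \<union> ?T) = card ?F + card ?T" by (rule card_Un_disjoint) auto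
    moreover have "?F \<union> ?T = {..<l}" by auto
    ultimately show ?thesis by simp
  qed
  ultimately have "l \<le> 2 * card ?T" by linarith
  moreover have "l \<noteq> 2 * card ?T" using assms(1) by (metis dvd_triv_left)
  ultimately show ?thesis by linarith
qed

type_synonym view = "bool list \<times> bool list"

text \<open>A state of a walk along a cycle is the pair of views (label, output) of a node's
  predecessor and of the node itself; \<open>view_step D\<close> holds between consecutive states when
  the middle node is accepted by \<open>D\<close>, covered, and agrees with its successor on their edge.\<close>

definition view_step :: "verifier \<Rightarrow> view \<times> view \<Rightarrow> view \<times> view \<Rightarrow> bool" where
  "view_step D = (\<lambda>((lp, _), (lv, ov)) (u, (ls, os)).
     u = (lv, ov) \<and> D ov lv [lp, ls] \<and> ov ! 1 = os ! 0 \<and> (ov ! 0 \<or> ov ! 1))"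

definition cycle_state :: "nat \<Rightarrow> (nat \<Rightarrow> bool list) \<Rightarrow> (nat \<Rightarrow> bool list) \<Rightarrow> nat \<Rightarrow> view \<times> view" where
  "cycle_state n L Out i =
     (let v = i mod n in ((L (cyc_prev n v), Out (cyc_prev n v)), (L v, Out v)))"

lemma closed_walk_cycle_state:
  assumes "0 < n" "ec_feasible {..<n} (cyc_nb n) Out" "accepts D {..<n} (cyc_nb n) Out L"
  shows "closed_walk (view_step D) (cycle_state n L Out) n"
  unfolding closed_walk_def
proof (intro conjI allI impI)
  fix i
  define v where "v = i mod n"
  have v: "v < n" using assms(1) by (simp add: v_def)
  have "D (Out v) (L v) [L (cyc_prev n v), L (cyc_next n v)]"
    using assms(3) v by (simp add: accepts_def cyc_nb_def)
  moreover have "cycle_state n L Out (Suc i) = ((L v, Out v), (L (cyc_next n v), Out (cyc_next n v)))"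
    using assms(1) by (simp add: cycle_state_def Let_def v_def cyc_prev_Suc_mod cyc_next_mod)
  ultimately show "view_step D (cycle_state n L Out i) (cycle_state n L Out (Suc i))"
    using ec_feasible_cycleD[OF assms(2) v] by (simp add: view_step_def cycle_state_def Let_def v_def)
qed (simp add: cycle_state_def)

definition bounded_views :: "nat \<Rightarrow> view set" where
  "bounded_views s = {(lab, out). length lab \<le> s \<and> length out = 2}"

lemma finite_bounded_views: "finite (bounded_views s)"
  and card_bounded_views_le: "card (bounded_views s) \<le> 2 ^ (s + 3)"
proof -
  let ?Lab = "{xs. set xs \<subseteq> (UNIV :: bool set) \<and> length xs \<le> s}"
    and ?Out = "{xs. set xs \<subseteq> (UNIV :: bool set) \<and> length xs = 2}"
  have eq: "bounded_views s = ?Lab \<times> ?Out" by (auto simp: bounded_views_def)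
  show "finite (bounded_views s)"
    unfolding eq by (intro finite_cartesian_product finite_lists_length_le finite_lists_length_eq) auto
  have "card ?Lab = (\<Sum>i=0..<Suc s. 2 ^ i)"
    using card_lists_length_le[of "UNIV :: bool set" s]
    by (simp add: atLeast0LessThan lessThan_Suc_atMost)
  also have "\<dots> \<le> 2 ^ (s + 1)" by (simp add: sum_power2)
  finally have "card ?Lab \<le> 2 ^ (s + 1)" .
  moreover have "card ?Out = 4"
    using card_lists_length_eq[of "UNIV :: bool set" 2] by simp
  ultimately have "card ?Lab * card ?Out \<le> 2 ^ (s + 1) * 4"
    by simp
  then show "card (bounded_views s) \<le> 2 ^ (s + 3)"
    by (simp add: eq card_cartesian_product power_add)
qed

lemma cycle_state_bounded:
  assumes "0 < n" "ec_feasible {..<n} (cyc_nb n) Out" "\<And>v. v < n \<Longrightarrow> length (L v) \<le> s"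
  shows "cycle_state n L Out i \<in> bounded_views s \<times> bounded_views s"
  using assms ec_feasible_cycleD(1)[OF assms(2)] cyc_prev_less[of "i mod n" n]
  by (simp add: cycle_state_def bounded_views_def Let_def)

lemma view_step_iff:
  "view_step D x y \<longleftrightarrow> fst y = snd x \<and> D (snd (snd x)) (fst (snd x)) [fst (fst x), fst (snd y)]
     \<and> snd (snd x) ! 1 = snd (snd y) ! 0 \<and> (snd (snd x) ! 0 \<or> snd (snd x) ! 1)"
  by (simp add: view_step_def split_beta)

lemma accepts_unrolled_walk:
  assumes walk: "closed_walk (view_step D) q l" and "0 < l" "l dvd n" "0 < n"
  shows "accepts D {..<n} (cyc_nb n) (\<lambda>v. snd (snd (q (v mod l)))) (\<lambda>v. fst (snd (q (v mod l))))"
  unfolding accepts_def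
proof
  fix v assume "v \<in> {..<n}"
  then have v: "v < n" by simp
  define g where "g j = q (j mod l)" for j
  have step: "view_step D (g j) (g (Suc j))" for j
    unfolding g_def by (rule closed_walk_mod[OF walk \<open>0 < l\<close>])
  have g_mod: "g (j mod n) = g j" for j
    using \<open>l dvd n\<close> by (simp add: g_def mod_mod_cancel)
  have "cyc_next n (cyc_prev n v) = Suc (cyc_prev n v) mod n"
    using cyc_next_mod[OF \<open>0 < n\<close>, of "cyc_prev n v"] cyc_prev_less[OF v] by simp
  then have "g (Suc (cyc_prev n v)) = g v"
    using g_mod cyc_next_prev[OF v] by metis
  then have "fst (snd (g (cyc_prev n v))) = fst (fst (g v))"
    using step[of "cyc_prev n v"] by (simp add: view_step_iff)
  moreover have "g (cyc_next n v) = g (Suc v)"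
    using g_mod cyc_next_mod[OF \<open>0 < n\<close>, of v] v by simp
  moreover have "D (snd (snd (g v))) (fst (snd (g v))) [fst (fst (g v)), fst (snd (g (Suc v)))]"
    using step[of v] unfolding view_step_iff by blast
  ultimately show "D (snd (snd (q (v mod l)))) (fst (snd (q (v mod l))))
      (map (\<lambda>v. fst (snd (q (v mod l)))) (cyc_nb n v))"
    by (simp add: cyc_nb_def g_def)
qed

lemma ec_f_unrolled_walk_ge:
  assumes walk: "closed_walk (view_step D) q l" and "odd l" "3 \<le> k * l"
  shows "k * (l + 1) \<le> 2 * ec_f {..<k * l} (cyc_nb (k * l)) (\<lambda>v. snd (snd (q (v mod l))))"
proof -
  define b where "b j = snd (snd (q j)) ! 1" for j
  have "0 < l" using \<open>odd l\<close> by (intro odd_pos)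
  have "b (Suc j mod l)" if "\<not> b (j mod l)" for j
    using that closed_walk_mod[OF walk \<open>0 < l\<close>, of j] closed_walk_mod[OF walk \<open>0 < l\<close>, of "Suc j"]
    by (auto simp: view_step_iff b_def)
  then have "l + 1 \<le> 2 * card {j. j < l \<and> b j}"
    by (rule card_true_cyclic_no_two_false[OF \<open>odd l\<close>])
  then have "k * (l + 1) \<le> k * (2 * card {j. j < l \<and> b j})"
    by (rule mult_le_mono2)
  also have "\<dots> = 2 * card {v. v < k * l \<and> b (v mod l)}"
    by (simp add: card_mod_periodic)
  also have "\<dots> \<le> 2 * ec_f {..<k * l} (cyc_nb (k * l)) (\<lambda>v. snd (snd (q (v mod l))))"
    using card_next_covered_le_ec_f[OF \<open>3 \<le> k * l\<close>] by (simp add: b_def)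
  finally show ?thesis .
qed

lemma ec_FN_unrolled_walk:
  assumes "1 \<le> \<kappa>" "closed_walk (view_step D) q l" "odd l" "l < \<kappa>"
  defines "n \<equiv> (2 * \<kappa> + 3) * l"
  shows "ec_FN (2 * \<kappa> + 1) ((real \<kappa> + 1) / real \<kappa>) {..<n} (cyc_nb n) (\<lambda>v. snd (snd (q (v mod l))))"
proof -
  define k where "k = 2 * \<kappa> + 3"
  define Out where "Out = (\<lambda>v. snd (snd (q (v mod l))))"
  have "0 < l" using \<open>odd l\<close> by (intro odd_pos)
  then have n: "3 \<le> n" "2 * \<kappa> + 1 \<le> n" "odd n"
    using \<open>odd l\<close> by (auto simp: n_def intro: order_trans[OF _ mult_le_mono2[of 1]])
  let ?f = "ec_f {..<n} (cyc_nb n) Out" and ?opt = "ec_OPT {..<n} (cyc_nb n)"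
  have cost: "k * (l + 1) \<le> 2 * ?f"
    using ec_f_unrolled_walk_ge[OF assms(2,3)] n(1) by (simp add: n_def k_def Out_def)
  have "2 * ((n + 1) div 2) = k * l + 1" using n(3) by (simp add: n_def k_def)
  then have opt: "2 * ?opt \<le> k * l + 1"
    using ec_OPT_cycle_le[OF n(1)] by linarith
  have "2 * ((\<kappa> + 1) * ?opt) \<le> (\<kappa> + 1) * (k * l + 1)"
    using mult_le_mono2[OF opt, of "\<kappa> + 1"] by (simp add: ac_simps)
  also have "\<dots> < \<kappa> * (k * (l + 1))"
  proof -
    have "k * l + k \<le> k * \<kappa>"
      using mult_le_mono2[of "l + 1" \<kappa> k] \<open>l < \<kappa>\<close> by (simp add: algebra_simps)
    then show ?thesis by (simp add: k_def algebra_simps)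
  qed
  also have "\<dots> \<le> 2 * (\<kappa> * ?f)"
    using mult_le_mono2[OF cost, of \<kappa>] by (simp add: ac_simps)
  finally have "(\<kappa> + 1) * ?opt < \<kappa> * ?f" by simp
  then have "(real \<kappa> + 1) / real \<kappa> * real ?opt < real ?f"
    using \<open>1 \<le> \<kappa>\<close> by (simp add: field_simps flip: of_nat_mult of_nat_Suc)
  then show ?thesis
    unfolding ec_FN_def Out_def[symmetric]
    using ec_universe_cycle[OF n(1,2)] by fastforce
qed

lemma card_bounded_view_pairs_le:
  "card (bounded_views s \<times> bounded_views s) \<le> 2 ^ (2 * s + 6)"
proof -
  have "card (bounded_views s \<times> bounded_views s) \<le> 2 ^ (s + 3) * 2 ^ (s + 3)"
    unfolding card_cartesian_product by (rule mult_le_mono[OF card_bounded_views_le card_bounded_views_le])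
  also have "\<dots> = 2 ^ (2 * s + 6)"
    by (simp flip: power_add)
  finally show ?thesis .
qed

lemma ec_APLS_short_odd_walk:
  assumes "1 \<le> \<kappa>" and apls: "ec_APLS (2 * \<kappa> + 1) \<alpha> P D"
    and short: "\<And>V nb S v. ec_FY (2 * \<kappa> + 1) V nb S \<Longrightarrow> v \<in> V \<Longrightarrow> length (P V nb S v) \<le> s"
  obtains q l where "odd l" "l \<le> 2 ^ (2 * s + 6)" "closed_walk (view_step D) q l"
proof -
  define N where "N = 2 * \<kappa> + 1"
  have N: "3 \<le> N" "0 < N" "odd N" using assms(1) by (auto simp: N_def)
  have "ec_legal {..<N} (cyc_nb N)"
    using ec_feasible_alt_cover[OF N(1)] unfolding ec_legal_def by blast
  then obtain Out where feas: "ec_feasible {..<N} (cyc_nb N) Out"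
    and opt: "ec_f {..<N} (cyc_nb N) Out = ec_OPT {..<N} (cyc_nb N)"
    by (rule ec_optimal_cover_exists)
  have "ec_universe (2 * \<kappa> + 1) {..<N} (cyc_nb N) Out"
    by (rule ec_universe_cycle[OF N(1)]) (simp add: N_def)
  then have FY: "ec_FY (2 * \<kappa> + 1) {..<N} (cyc_nb N) Out"
    unfolding ec_FY_def using feas opt by simp
  define L where "L = P {..<N} (cyc_nb N) Out"
  have "accepts D {..<N} (cyc_nb N) Out L"
    using apls FY unfolding ec_APLS_def gpls_def L_def by blast
  then have walk: "closed_walk (view_step D) (cycle_state N L Out) N"
    by (rule closed_walk_cycle_state[OF N(2) feas])
  let ?A = "bounded_views s \<times> bounded_views s"
  have "cycle_state N L Out i \<in> ?A" for i
    by (rule cycle_state_bounded[OF N(2) feas]) (simp add: L_def short[OF FY])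
  then have "cycle_state N L Out ` {..N} \<subseteq> ?A" by blast
  moreover have "finite ?A" using finite_bounded_views by simp
  ultimately obtain q l where "odd l" "l \<le> card ?A" "closed_walk (view_step D) q l"
    using closed_walk_odd_shorten[OF _ _ walk N(3)] by blast
  then show ?thesis
    using that card_bounded_view_pairs_le[of s] by (meson order_trans)
qed

lemma ec_APLS_label_length_bound:
  assumes "1 \<le> \<kappa>" and apls: "ec_APLS (2 * \<kappa> + 1) ((real \<kappa> + 1) / real \<kappa>) P D"
    and short: "\<And>V nb S v. ec_FY (2 * \<kappa> + 1) V nb S \<Longrightarrow> v \<in> V \<Longrightarrow> length (P V nb S v) \<le> s"
  shows "\<kappa> \<le> 2 ^ (2 * s + 6)"
proof (rule ccontr)
  assume "\<not> \<kappa> \<le> 2 ^ (2 * s + 6)"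
  moreover obtain q l where "odd l" "l \<le> 2 ^ (2 * s + 6)" and walk: "closed_walk (view_step D) q l"
    using ec_APLS_short_odd_walk[OF assms] .
  ultimately have "l < \<kappa>" by linarith
  have "0 < l" using \<open>odd l\<close> by (intro odd_pos)
  then have "accepts D {..<(2 * \<kappa> + 3) * l} (cyc_nb ((2 * \<kappa> + 3) * l))
      (\<lambda>v. snd (snd (q (v mod l)))) (\<lambda>v. fst (snd (q (v mod l))))"
    by (intro accepts_unrolled_walk[OF walk]) auto
  with ec_FN_unrolled_walk[OF assms(1) walk \<open>odd l\<close> \<open>l < \<kappa>\<close>] apls show False
    unfolding ec_APLS_def gpls_def by blast
qed

lemma length_le_of_proof_size_less:
  assumes "proof_size FY P < ereal r" "FY V nb S" "v \<in> V"
  shows "length (P V nb S v) \<le> nat \<lfloor>r\<rfloor>"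
proof -
  have "ereal (real (length (P V nb S v))) \<le> proof_size FY P"
    unfolding proof_size_def by (rule SUP_upper2[of "(V, nb, S, v)"]) (use assms(2,3) in auto)
  then have "ereal (real (length (P V nb S v))) < ereal r"
    using assms(1) by (rule le_less_trans)
  then have "real (length (P V nb S v)) \<le> r" by simp
  then show ?thesis by (rule le_nat_floor)
qed

lemma two_pow_less_of_ln_bound:
  assumes "10000 \<le> \<kappa>" "real s \<le> ln (real \<kappa>) / 8"
  shows "2 ^ (2 * s + 6) < \<kappa>"
proof -
  have \<kappa>: "0 < real \<kappa>" "0 \<le> ln (real \<kappa>)" using assms(1) by auto
  have "ln ((4::real) ^ s) = real s * ln 4" by (simp add: ln_realpow)
  also have "\<dots> \<le> real s * 3"
    using ln_le_minus_one[of "4::real"] by (intro mult_left_mono) auto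
  also have "\<dots> \<le> ln (sqrt (real \<kappa>))"
    using assms(2) \<kappa> by (simp add: ln_sqrt)
  finally have "(4::real) ^ s \<le> sqrt (real \<kappa>)"
    using \<kappa> by (simp add: ln_le_cancel_iff)
  moreover have "0 < sqrt (real \<kappa>)" using \<kappa> by simp
  ultimately have "64 * (4::real) ^ s < 100 * sqrt (real \<kappa>)" by linarith
  also have "\<dots> \<le> sqrt (real \<kappa>) * sqrt (real \<kappa>)"
    using assms(1) by (intro mult_right_mono real_le_rsqrt) auto
  also have "\<dots> = real \<kappa>"
    using \<kappa> by simp
  finally have "64 * (4::real) ^ s < real \<kappa>" .
  then have "real (2 ^ (2 * s + 6)) < real \<kappa>"
    by (simp add: power_add power_mult)
  then show ?thesis by (simp only: of_nat_less_iff)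
qed

theorem theorem5p9:
  shows "\<exists>c::real > 0. \<exists>K::nat. \<forall>\<kappa>::nat. \<kappa> \<ge> 1 \<and> \<kappa> \<ge> K \<longrightarrow>
     (\<forall>P D. ec_APLS (2 * \<kappa> + 1) ((real \<kappa> + 1) / real \<kappa>) P D \<longrightarrow>
        ereal (c * ln (real \<kappa>)) \<le> proof_size (ec_FY (2 * \<kappa> + 1)) P)"
proof (intro exI[of _ "1/8"] conjI exI[of _ 10000] allI impI)
  fix \<kappa> :: nat and P D
  assume \<kappa>: "1 \<le> \<kappa> \<and> 10000 \<le> \<kappa>"
    and apls: "ec_APLS (2 * \<kappa> + 1) ((real \<kappa> + 1) / real \<kappa>) P D"
  define s where "s = nat \<lfloor>1/8 * ln (real \<kappa>)\<rfloor>"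
  show "ereal (1/8 * ln (real \<kappa>)) \<le> proof_size (ec_FY (2 * \<kappa> + 1)) P"
  proof (rule ccontr)
    assume "\<not> ereal (1/8 * ln (real \<kappa>)) \<le> proof_size (ec_FY (2 * \<kappa> + 1)) P"
    then have "proof_size (ec_FY (2 * \<kappa> + 1)) P < ereal (1/8 * ln (real \<kappa>))" by simp
    then have "\<kappa> \<le> 2 ^ (2 * s + 6)"
      using \<kappa> length_le_of_proof_size_less unfolding s_def
      by (intro ec_APLS_label_length_bound[OF _ apls]) auto
    moreover have "2 ^ (2 * s + 6) < \<kappa>"
      using \<kappa> of_nat_floor[of "1/8 * ln (real \<kappa>)"]
      by (intro two_pow_less_of_ln_bound) (auto simp: s_def)
    ultimately show False by simp
  qed
qed simp

end
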